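(* Let $G_1$ be the planar symmetry group of a periodic isonemal prefabric, and suppose $G_1$ is of crystallographic type $pgg$ or $pmg$, with its reflection and glide-reflection axes at $45^\circ$ to the strand directions. Consider a rectangular lattice unit of $G_1$ whose corners are centres of half-turn symmetries; the nine points consisting of its four corners, the four midpoints of its sides, and its centre are all centres of half-turns (with or without side reversal). Then either all nine of these half-turn centres lie at cell corners or cell centres, or all nine lie on cell boundaries but not at cell corners.
   Context: A prefabric consists of two perpendicular layers of parallel strands of unit width: warps (vertical) and wefts (horizontal). The plane is divided into unit square cells, each cell being where one warp crosses one weft. Each cell is coloured dark if the warp is on top as seen from the front, and pale if the weft is on top. A symmetry is an isometry of the plane that maps strands to strands and preserves which strand lies on top at each crossing. Such an isometry may need to be combined with the reversal $\tau$ of the two sides of the prefabric; if so it is called side-reversing, and otherwise side-preserving. The prefabric is isonemal if its symmetry group acts transitively on the set of strands. $G_1$ denotes the group of planar isometries underlying the symmetries. A half-turn centre of such a symmetry necessarily lies at a cell corner, at a cell centre, or at the midpoint of a cell edge. *)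

theory Defs
  imports "HOL-Analysis.Analysis"
begin

type_synonym pt = "real \<times> real"

datatype strand = Warp int | Weft int

fun strand_set :: "strand \<Rightarrow> pt set" where
  "strand_set (Warp i) = {p. of_int i \<le> fst p \<and> fst p \<le> of_int i + 1}"
| "strand_set (Weft j) = {p. of_int j \<le> snd p \<and> snd p \<le> of_int j + 1}"

definition cell :: "int \<Rightarrow> int \<Rightarrow> pt set" where
  "cell i j = strand_set (Warp i) \<inter> strand_set (Weft j)"

text \<open>A prefabric is given by its colouring: D i j = True iff cell (i,j) is dark,
  i.e. the warp i lies on top there (seen from the front); otherwise the weft j is on top.\<close>

definition top_strand :: "(int \<Rightarrow> int \<Rightarrow> bool) \<Rightarrow> int \<Rightarrow> int \<Rightarrow> strand" where
  "top_strand D i j = (if D i j then Warp i else Weft j)"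

definition bottom_strand :: "(int \<Rightarrow> int \<Rightarrow> bool) \<Rightarrow> int \<Rightarrow> int \<Rightarrow> strand" where
  "bottom_strand D i j = (if D i j then Weft j else Warp i)"

definition isometry :: "(pt \<Rightarrow> pt) \<Rightarrow> bool" where
  "isometry f \<longleftrightarrow> (\<forall>p q. dist (f p) (f q) = dist p q)"

text \<open>f is a symmetry of the prefabric D, side-reversing iff rv (i.e. combined with \<tau>).\<close>
definition is_sym :: "(int \<Rightarrow> int \<Rightarrow> bool) \<Rightarrow> (pt \<Rightarrow> pt) \<Rightarrow> bool \<Rightarrow> bool" where
  "is_sym D f rv \<longleftrightarrow> isometry f \<and>
     (\<forall>s. \<exists>s'. f ` strand_set s = strand_set s') \<and>
     (\<forall>i j i' j'. f ` cell i j = cell i' j' \<longrightarrow>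
        f ` strand_set (top_strand D i j) =
          strand_set (if rv then bottom_strand D i' j' else top_strand D i' j'))"

definition G1 :: "(int \<Rightarrow> int \<Rightarrow> bool) \<Rightarrow> (pt \<Rightarrow> pt) set" where
  "G1 D = {f. \<exists>rv. is_sym D f rv}"

definition isonemal :: "(int \<Rightarrow> int \<Rightarrow> bool) \<Rightarrow> bool" where
  "isonemal D \<longleftrightarrow> (\<forall>s s'. \<exists>f rv. is_sym D f rv \<and> f ` strand_set s = strand_set s')"

definition transl :: "(int \<Rightarrow> int \<Rightarrow> bool) \<Rightarrow> pt set" where
  "transl D = {v. (\<lambda>p. p + v) \<in> G1 D}"

definition periodic :: "(int \<Rightarrow> int \<Rightarrow> bool) \<Rightarrow> bool" where
  "periodic D \<longleftrightarrow> (\<exists>v w. v \<in> transl D \<and> w \<in> transl D \<and>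
                      fst v * snd w - snd v * fst w \<noteq> 0)"

definition lin :: "(pt \<Rightarrow> pt) \<Rightarrow> pt \<Rightarrow> pt" where
  "lin f = (\<lambda>p. f p - f 0)"

definition sw :: "pt \<Rightarrow> pt" where
  "sw p = (snd p, fst p)"

text \<open>Point group of G is D2 = {1, -1, R, -R} with R the reflection in the line y = x,
  i.e. all reflection and glide-reflection axes are at 45 degrees to the strands.\<close>
definition pointgroup_D2_diag :: "(pt \<Rightarrow> pt) set \<Rightarrow> bool" where
  "pointgroup_D2_diag G \<longleftrightarrow> lin ` G = {id, (\<lambda>p. - p), sw, (\<lambda>p. - sw p)}"

definition has_mirror :: "(pt \<Rightarrow> pt) set \<Rightarrow> (pt \<Rightarrow> pt) \<Rightarrow> bool" where
  "has_mirror G L \<longleftrightarrow> (\<exists>f\<in>G. lin f = L \<and> (\<exists>p. f p = p))"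

text \<open>Crystallographic types: point group D2 (here with axes at 45 degrees);
  pgg has no mirrors, pmg has mirrors in exactly one of the two perpendicular directions
  (pmm and cmm have mirrors in both).\<close>
definition type_pgg_45 :: "(pt \<Rightarrow> pt) set \<Rightarrow> bool" where
  "type_pgg_45 G \<longleftrightarrow> pointgroup_D2_diag G \<and>
     \<not> has_mirror G sw \<and> \<not> has_mirror G (\<lambda>p. - sw p)"

definition type_pmg_45 :: "(pt \<Rightarrow> pt) set \<Rightarrow> bool" where
  "type_pmg_45 G \<longleftrightarrow> pointgroup_D2_diag G \<and>
     (has_mirror G sw \<noteq> has_mirror G (\<lambda>p. - sw p))"

definition half_turn_centre :: "(int \<Rightarrow> int \<Rightarrow> bool) \<Rightarrow> pt \<Rightarrow> bool" where
  "half_turn_centre D q \<longleftrightarrow> (\<lambda>p. 2 *\<^sub>R q - p) \<in> G1 D"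

definition rect_lattice_unit :: "(int \<Rightarrow> int \<Rightarrow> bool) \<Rightarrow> pt \<Rightarrow> pt \<Rightarrow> pt \<Rightarrow> bool" where
  "rect_lattice_unit D c v w \<longleftrightarrow>
     transl D = {of_int m *\<^sub>R v + of_int n *\<^sub>R w | m n. True} \<and>
     fst v * snd w - snd v * fst w \<noteq> 0 \<and>
     fst v * fst w + snd v * snd w = 0"

definition cell_corner :: "pt \<Rightarrow> bool" where
  "cell_corner q \<longleftrightarrow> fst q \<in> \<int> \<and> snd q \<in> \<int>"

definition cell_centre :: "pt \<Rightarrow> bool" where
  "cell_centre q \<longleftrightarrow> fst q - 1/2 \<in> \<int> \<and> snd q - 1/2 \<in> \<int>"

definition boundary_not_corner :: "pt \<Rightarrow> bool" where
  "boundary_not_corner q \<longleftrightarrow> (fst q \<in> \<int> \<or> snd q \<in> \<int>) \<and> \<not> cell_corner q"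

definition nine_points :: "pt \<Rightarrow> pt \<Rightarrow> pt \<Rightarrow> pt set" where
  "nine_points c v w = {c + (real a / 2) *\<^sub>R v + (real b / 2) *\<^sub>R w | a b. a \<in> {0,1,2::nat} \<and> b \<in> {0,1,2::nat}}"

end

theory Submission
  imports Defs
begin

(* Every symmetry in G_1 maps strands to strands; hence an isometry of the
   form p \<mapsto> \<plusminus>p + u or p \<mapsto> \<plusminus>sw p + u lying in G_1 has an integral translation part u.
   In particular translation vectors are integral, and a half-turn centre q has 2q integral,
   so q is a cell corner, a cell centre or a point on a cell edge.  Which of the three kinds
   occurs is governed by whether fst q + snd q is an integer. *)

lemma int_eq_half:
  fixes a b :: int
  assumes "of_int b \<le> (of_int a::real) + 1/2" "(of_int a::real) + 1/2 \<le> of_int b + 1"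
  shows "a = b"
proof -
  have "(of_int b::real) < of_int (a + 1)" "(of_int a::real) < of_int (b + 1)"
    using assms by simp_all
  then show ?thesis by linarith
qed

lemma cell_inj: "cell a b = cell i j \<Longrightarrow> a = i \<and> b = j"
proof -
  assume "cell a b = cell i j"
  moreover have "(of_int a + 1/2, of_int b + 1/2) \<in> cell a b" by (simp add: cell_def)
  ultimately have "(of_int a + 1/2, of_int b + 1/2) \<in> cell i j" by simp
  then show ?thesis using int_eq_half[of i a] int_eq_half[of j b] by (auto simp: cell_def)
qed

lemma strand_set_inj: "strand_set s = strand_set s' \<Longrightarrow> s = s'"
proof (cases s; cases s')
  fix a b assume eq: "strand_set s = strand_set s'" and "s = Warp a" "s' = Warp b"
  have "(of_int a + 1/2, 0) \<in> strand_set s" using \<open>s = Warp a\<close> by simp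
  then have "(of_int a + 1/2, 0) \<in> strand_set (Warp b)" using eq \<open>s' = Warp b\<close> by simp
  then show "s = s'" using \<open>s = Warp a\<close> \<open>s' = Warp b\<close> int_eq_half[of b a] by simp
next
  fix a b assume eq: "strand_set s = strand_set s'" and "s = Weft a" "s' = Weft b"
  have "(0, of_int a + 1/2) \<in> strand_set s" using \<open>s = Weft a\<close> by simp
  then have "(0, of_int a + 1/2) \<in> strand_set (Weft b)" using eq \<open>s' = Weft b\<close> by simp
  then show "s = s'" using \<open>s = Weft a\<close> \<open>s' = Weft b\<close> int_eq_half[of b a] by simp
next
  fix a b assume eq: "strand_set s = strand_set s'" and "s = Warp a" "s' = Weft b"
  have "(of_int a, of_int b + 2) \<in> strand_set s" using \<open>s = Warp a\<close> by simp
  then show "s = s'" using eq \<open>s' = Weft b\<close> by simp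
next
  fix a b assume eq: "strand_set s = strand_set s'" and "s = Weft a" "s' = Warp b"
  have "(of_int b + 2, of_int a) \<in> strand_set s" using \<open>s = Weft a\<close> by simp
  then show "s = s'" using eq \<open>s' = Warp b\<close> by simp
qed

lemma cell_dist_le: "p \<in> cell i j \<Longrightarrow> q \<in> cell i j \<Longrightarrow> dist p q \<le> 2"
proof -
  assume "p \<in> cell i j" "q \<in> cell i j"
  then have "\<bar>fst p - fst q\<bar> \<le> 1" "\<bar>snd p - snd q\<bar> \<le> 1" by (auto simp: cell_def)
  moreover have "dist p q \<le> \<bar>fst p - fst q\<bar> + \<bar>snd p - snd q\<bar>"
    unfolding dist_prod_def dist_real_def power2_abs by (rule sqrt_sum_squares_le_sum_abs)
  ultimately show ?thesis by linarith
qed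

definition strand_preserving :: "(pt \<Rightarrow> pt) \<Rightarrow> bool" where
  "strand_preserving f \<longleftrightarrow> (\<forall>s. \<exists>s'. f ` strand_set s = strand_set s')"

lemma isometry_inj: "isometry f \<Longrightarrow> inj f"
  unfolding isometry_def inj_def by (metis dist_eq_0_iff)

(* A strand-preserving isometry maps the warp and the weft through a cell onto a warp and a
   weft (in some order): two parallel strands cannot meet in the image of a bounded cell. *)
lemma crossing_strands_image:
  assumes iso: "isometry f" and sp: "strand_preserving f"
  shows "\<exists>a b. (f ` strand_set (Warp i) = strand_set (Warp a) \<and> f ` strand_set (Weft j) = strand_set (Weft b))
             \<or> (f ` strand_set (Warp i) = strand_set (Weft b) \<and> f ` strand_set (Weft j) = strand_set (Warp a))"
proof -
  obtain s1 s2 where s1: "f ` strand_set (Warp i) = strand_set s1"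
    and s2: "f ` strand_set (Weft j) = strand_set s2"
    using sp unfolding strand_preserving_def by metis
  have meet: "f ` cell i j = strand_set s1 \<inter> strand_set s2"
    unfolding cell_def image_Int[OF isometry_inj[OF iso]] s1 s2 ..
  have small: "dist x y \<le> 2" if "x \<in> f ` cell i j" "y \<in> f ` cell i j" for x y
    using that cell_dist_le iso unfolding isometry_def by auto
  define p where "p = f (of_int i, of_int j)"
  have p: "p \<in> strand_set s1 \<inter> strand_set s2"
    unfolding p_def meet[symmetric] by (simp add: cell_def)
  show ?thesis
  proof (cases s1; cases s2)
    fix a a' assume "s1 = Warp a" "s2 = Warp a'"
    then have "p + (0, 3) \<in> f ` cell i j" using p unfolding meet by auto
    then have "dist p (p + (0, 3)) \<le> 2" using small p meet by blast
    then show ?thesis by (simp add: dist_norm)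
  next
    fix b b' assume "s1 = Weft b" "s2 = Weft b'"
    then have "p + (3, 0) \<in> f ` cell i j" using p unfolding meet by auto
    then have "dist p (p + (3, 0)) \<le> 2" using small p meet by blast
    then show ?thesis by (simp add: dist_norm)
  qed (use s1 s2 in auto)
qed

lemma crossing_strands_image_at:
  assumes iso: "isometry f" and sp: "strand_preserving f" and fc: "f ` cell k l = cell i j"
  shows "(f ` strand_set (Warp k) = strand_set (Warp i) \<and> f ` strand_set (Weft l) = strand_set (Weft j))
       \<or> (f ` strand_set (Warp k) = strand_set (Weft j) \<and> f ` strand_set (Weft l) = strand_set (Warp i))"
proof -
  obtain a b where ab: "(f ` strand_set (Warp k) = strand_set (Warp a) \<and> f ` strand_set (Weft l) = strand_set (Weft b))
             \<or> (f ` strand_set (Warp k) = strand_set (Weft b) \<and> f ` strand_set (Weft l) = strand_set (Warp a))"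
    using crossing_strands_image[OF iso sp] by blast
  have "f ` cell k l = cell a b"
    using ab unfolding cell_def image_Int[OF isometry_inj[OF iso]] by auto
  then have "a = i \<and> b = j" using fc cell_inj by metis
  then show ?thesis using ab by blast
qed

lemma top_bottom_image:
  assumes iso: "isometry f" and sp: "strand_preserving f" and fc: "f ` cell k l = cell i j"
    and top: "f ` strand_set (top_strand D k l) = strand_set T"
  shows "(T = top_strand D i j \<and> f ` strand_set (bottom_strand D k l) = strand_set (bottom_strand D i j))
       \<or> (T = bottom_strand D i j \<and> f ` strand_set (bottom_strand D k l) = strand_set (top_strand D i j))"
  using crossing_strands_image_at[OF iso sp fc] top
  by (auto simp: top_strand_def bottom_strand_def simp del: strand_set.simps
      split: if_splits dest: strand_set_inj)

lemma is_sym_comp: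
  assumes f: "is_sym D f r1" and g: "is_sym D g r2"
  shows "is_sym D (f \<circ> g) (r1 \<noteq> r2)"
  unfolding is_sym_def
proof (intro conjI allI impI)
  show "isometry (f \<circ> g)" using f g unfolding is_sym_def isometry_def comp_def by metis
  fix s show "\<exists>s'. (f \<circ> g) ` strand_set s = strand_set s'"
    using f g unfolding is_sym_def image_comp[symmetric] by metis
next
  fix i j i' j' assume fgc: "(f \<circ> g) ` cell i j = cell i' j'"
  have f_sp: "isometry f" "strand_preserving f" and g_sp: "isometry g" "strand_preserving g"
    using f g unfolding is_sym_def strand_preserving_def by blast+
  obtain k l where gc: "g ` cell i j = cell k l"
    using crossing_strands_image[OF g_sp, of i j] unfolding cell_def image_Int[OF isometry_inj[OF g_sp(1)]]
    by blast
  have fc: "f ` cell k l = cell i' j'" using fgc unfolding image_comp[symmetric] gc .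
  have g_top: "g ` strand_set (top_strand D i j) = strand_set (if r2 then bottom_strand D k l else top_strand D k l)"
    using g gc unfolding is_sym_def by blast
  have f_top: "f ` strand_set (top_strand D k l) = strand_set (if r1 then bottom_strand D i' j' else top_strand D i' j')"
    using f fc unfolding is_sym_def by blast
  have f_bottom: "f ` strand_set (bottom_strand D k l) = strand_set (if r1 then top_strand D i' j' else bottom_strand D i' j')"
    using top_bottom_image[OF f_sp fc f_top] by (auto simp: top_strand_def bottom_strand_def split: if_splits)
  show "(f \<circ> g) ` strand_set (top_strand D i j)
      = strand_set (if r1 \<noteq> r2 then bottom_strand D i' j' else top_strand D i' j')"
    unfolding image_comp[symmetric] using g_top f_top f_bottom by (cases r1; cases r2) simp_all
qed

lemma G1_comp: "f \<in> G1 D \<Longrightarrow> g \<in> G1 D \<Longrightarrow> f \<circ> g \<in> G1 D"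
  unfolding G1_def using is_sym_comp by blast

definition affine_sym :: "real \<Rightarrow> bool \<Rightarrow> pt \<Rightarrow> pt \<Rightarrow> pt" where
  "affine_sym \<sigma> b u p = \<sigma> *\<^sub>R (if b then sw p else p) + u"

lemma sw_strand:
  "sw ` strand_set (Warp i) = strand_set (Weft i)" "sw ` strand_set (Weft i) = strand_set (Warp i)"
  by (force simp: sw_def image_iff)+

lemma strand_preserving_sw: "strand_preserving sw"
  unfolding strand_preserving_def
proof
  fix s show "\<exists>s'. sw ` strand_set s = strand_set s'" by (cases s) (use sw_strand in blast)+
qed

lemma strand_preserving_comp:
  "strand_preserving f \<Longrightarrow> strand_preserving g \<Longrightarrow> strand_preserving (f \<circ> g)"
  unfolding strand_preserving_def image_comp[symmetric] by metis

lemma vertical_edge_int: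
  assumes "\<And>y. (a, y) \<in> strand_set s" "\<And>y. (a + \<epsilon>, y) \<in> strand_set s" "\<epsilon> = 1 \<or> \<epsilon> = -1"
  shows "a \<in> \<int>"
proof (cases s)
  case (Warp k)
  then have "of_int k \<le> a" "a \<le> of_int k + 1" "of_int k \<le> a + \<epsilon>" "a + \<epsilon> \<le> of_int k + 1"
    using assms(1,2)[of 0] by auto
  with assms(3) have "a = of_int k \<or> a = of_int (k + 1)" by auto
  then show ?thesis by (metis Ints_of_int)
next
  case (Weft j)
  then show ?thesis using assms(1)[of "of_int j + 2"] by auto
qed

(* The edges of the image of warp 0 under p \<mapsto> \<sigma> p + u are the lines x = fst u, fst u + \<sigma>. *)
lemma affine_sym_fst_int:
  assumes \<sigma>: "\<sigma> = 1 \<or> \<sigma> = -1" and sp: "strand_preserving (affine_sym \<sigma> False u)"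
  shows "fst u \<in> \<int>"
proof -
  obtain s where s: "affine_sym \<sigma> False u ` strand_set (Warp 0) = strand_set s"
    using sp unfolding strand_preserving_def by blast
  have on_edge: "(fst u + \<sigma> * x, y) \<in> strand_set s" if "0 \<le> x" "x \<le> 1" for x y
  proof -
    have "(fst u + \<sigma> * x, y) = affine_sym \<sigma> False u (x, \<sigma> * (y - snd u))"
      using \<sigma> by (auto simp: affine_sym_def prod_eq_iff)
    then show ?thesis using that s[symmetric] by auto
  qed
  show ?thesis using on_edge[of 0] on_edge[of 1] \<sigma> by (intro vertical_edge_int) auto
qed

(* Integrality of u in general, reducing the swap case and the second coordinate to the
   previous lemma by composing and conjugating with sw. *)
lemma affine_sym_integral:
  assumes \<sigma>: "\<sigma> = 1 \<or> \<sigma> = -1" and sp: "strand_preserving (affine_sym \<sigma> b u)"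
  shows "fst u \<in> \<int> \<and> snd u \<in> \<int>"
proof -
  have "strand_preserving (if b then sw else id)"
    using strand_preserving_sw by (auto simp: strand_preserving_def)
  moreover have "affine_sym \<sigma> False u = affine_sym \<sigma> b u \<circ> (if b then sw else id)"
    by (auto simp: affine_sym_def sw_def)
  ultimately have sp0: "strand_preserving (affine_sym \<sigma> False u)"
    using sp strand_preserving_comp by metis
  have "affine_sym \<sigma> False (sw u) = sw \<circ> affine_sym \<sigma> False u \<circ> sw"
    by (auto simp: affine_sym_def sw_def)
  then have "strand_preserving (affine_sym \<sigma> False (sw u))"
    using sp0 strand_preserving_sw strand_preserving_comp by metis
  then show ?thesis using affine_sym_fst_int[OF \<sigma>] sp0 by (auto simp: sw_def)
qed

lemma G1_affine_integral:
  assumes "affine_sym \<sigma> b u \<in> G1 D" "\<sigma> = 1 \<or> \<sigma> = -1"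
  shows "fst u \<in> \<int> \<and> snd u \<in> \<int>"
proof -
  have "strand_preserving (affine_sym \<sigma> b u)"
    using assms(1) unfolding G1_def is_sym_def strand_preserving_def by blast
  then show ?thesis using affine_sym_integral assms(2) by blast
qed

lemma translation_affine: "(\<lambda>p. p + t) = affine_sym 1 False t"
  by (simp add: affine_sym_def fun_eq_iff)

lemma half_turn_affine: "(\<lambda>p. 2 *\<^sub>R q - p) = affine_sym (-1) False (2 *\<^sub>R q)"
  by (simp add: affine_sym_def fun_eq_iff)

lemma transl_integral: "t \<in> transl D \<Longrightarrow> fst t \<in> \<int> \<and> snd t \<in> \<int>"
  unfolding transl_def translation_affine using G1_affine_integral by blast

lemma half_turn_centre_integral:
  "half_turn_centre D q \<Longrightarrow> 2 * fst q \<in> \<int> \<and> 2 * snd q \<in> \<int>"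
  unfolding half_turn_centre_def half_turn_affine using G1_affine_integral[of "-1"] by fastforce

(* The product of a half-turn about q and a translation by t is a half-turn about q + t/2. *)
lemma half_turn_shift:
  assumes "half_turn_centre D q" "t \<in> transl D"
  shows "half_turn_centre D (q + (1/2) *\<^sub>R t)"
proof -
  have "(\<lambda>p. p + t) \<circ> (\<lambda>p. 2 *\<^sub>R q - p) \<in> G1 D"
    using assms G1_comp unfolding half_turn_centre_def transl_def by blast
  moreover have "(\<lambda>p. p + t) \<circ> (\<lambda>p. 2 *\<^sub>R q - p) = (\<lambda>p. 2 *\<^sub>R (q + (1/2) *\<^sub>R t) - p)"
    by (auto simp: fun_eq_iff algebra_simps)
  ultimately show ?thesis unfolding half_turn_centre_def by simp
qed

lemma half_turn_shift_multiple:
  assumes "half_turn_centre D q" "t \<in> transl D"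
  shows "half_turn_centre D (q + (real n / 2) *\<^sub>R t)"
proof (induction n)
  case 0 then show ?case using assms(1) by simp
next
  case (Suc n)
  have "q + (real (Suc n) / 2) *\<^sub>R t = (q + (real n / 2) *\<^sub>R t) + (1/2) *\<^sub>R t"
    by (simp add: algebra_simps add_divide_distrib scaleR_add_left)
  then show ?case using half_turn_shift[OF Suc.IH assms(2)] by metis
qed

lemma lin_decompose: "f p = lin f p + f 0"
  by (simp add: lin_def)

(* A symmetry g with linear part \<sigma> sw squares to the translation (S, \<sigma> S).  If some
   translation t had fst t + \<sigma> snd t = -S, then g composed with t would fix a point, i.e.
   would be a mirror with linear part \<sigma> sw. *)
lemma glide_without_mirror:
  assumes \<sigma>: "\<sigma> = 1 \<or> \<sigma> = -1" and g: "g \<in> G1 D" "lin g = (\<lambda>p. \<sigma> *\<^sub>R sw p)"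
    and no_mirror: "\<not> has_mirror (G1 D) (\<lambda>p. \<sigma> *\<^sub>R sw p)"
  shows "\<exists>S::int. (of_int S, \<sigma> * of_int S) \<in> transl D
                 \<and> (\<forall>t\<in>transl D. fst t + \<sigma> * snd t \<noteq> - of_int S)"
proof -
  define u where "u = g 0"
  have g_eq: "g = affine_sym \<sigma> True u"
  proof
    fix p show "g p = affine_sym \<sigma> True u p"
      unfolding lin_decompose[of g p] g(2) by (simp add: affine_sym_def u_def)
  qed
  then obtain S where S: "fst u + \<sigma> * snd u = of_int S"
    using G1_affine_integral[of \<sigma> True u D] g(1) \<sigma> g_eq by (metis Ints_add Ints_mult Ints_1 Ints_minus Ints_cases)
  have "g \<circ> g \<in> G1 D" using G1_comp g(1) by blast
  moreover have "g \<circ> g = (\<lambda>p. p + (of_int S, \<sigma> * of_int S))"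
  proof
    fix p show "(g \<circ> g) p = p + (of_int S, \<sigma> * of_int S)"
      using \<sigma> S[symmetric] by (auto simp: g_eq affine_sym_def sw_def prod_eq_iff)
  qed
  ultimately have "(of_int S, \<sigma> * of_int S) \<in> transl D" by (simp add: transl_def)
  moreover have "fst t + \<sigma> * snd t \<noteq> - of_int S" if t: "t \<in> transl D" for t
  proof
    assume e: "fst t + \<sigma> * snd t = - of_int S"
    have "g \<circ> (\<lambda>p. p + t) \<in> G1 D" using G1_comp g(1) t by (simp add: transl_def)
    moreover have "lin (g \<circ> (\<lambda>p. p + t)) = (\<lambda>p. \<sigma> *\<^sub>R sw p)"
      by (simp add: g_eq lin_def affine_sym_def sw_def fun_eq_iff algebra_simps)
    moreover have "(g \<circ> (\<lambda>p. p + t)) (\<sigma> * snd t + fst u, 0) = (\<sigma> * snd t + fst u, 0)"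
      using \<sigma> e S by (auto simp: g_eq affine_sym_def sw_def prod_eq_iff)
    ultimately have "has_mirror (G1 D) (\<lambda>p. \<sigma> *\<^sub>R sw p)" unfolding has_mirror_def by blast
    then show False using no_mirror by blast
  qed
  ultimately show ?thesis by blast
qed

definition lattice :: "pt \<Rightarrow> pt \<Rightarrow> pt set" where
  "lattice v w = {of_int m *\<^sub>R v + of_int n *\<^sub>R w | m n. True}"

lemma lattice_generators: "v \<in> lattice v w" "w \<in> lattice v w"
proof -
  have "v = of_int 1 *\<^sub>R v + of_int 0 *\<^sub>R w" "w = of_int 0 *\<^sub>R v + of_int 1 *\<^sub>R w" by simp_all
  then show "v \<in> lattice v w" "w \<in> lattice v w" unfolding lattice_def by blast+
qed

lemma lattice_lincomb:
  assumes "x \<in> lattice v w" "y \<in> lattice v w"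
  shows "of_int i *\<^sub>R x + of_int j *\<^sub>R y \<in> lattice v w"
proof -
  obtain m n m' n' where "x = of_int m *\<^sub>R v + of_int n *\<^sub>R w" "y = of_int m' *\<^sub>R v + of_int n' *\<^sub>R w"
    using assms unfolding lattice_def by blast
  then have "of_int i *\<^sub>R x + of_int j *\<^sub>R y
      = of_int (i * m + j * m') *\<^sub>R v + of_int (i * n + j * n') *\<^sub>R w"
    by (simp add: algebra_simps scaleR_add_left)
  then show ?thesis unfolding lattice_def by blast
qed

(* Parity argument: on an integral Z-module L, the functional t \<mapsto> fst t + \<sigma> snd t takes the
   value 2S but never -S; an odd value k = 2a + 1 would give -S at (-S) t + a (S, \<sigma> S). *)
lemma lattice_diagonal_even:
  fixes \<sigma> :: real and S :: int
  assumes \<sigma>: "\<sigma> = 1 \<or> \<sigma> = -1"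
    and closed: "\<And>x y i j. x \<in> L \<Longrightarrow> y \<in> L \<Longrightarrow> of_int i *\<^sub>R x + of_int j *\<^sub>R y \<in> L"
    and integral: "\<And>t. t \<in> L \<Longrightarrow> fst t \<in> \<int> \<and> snd t \<in> \<int>"
    and s: "(of_int S, \<sigma> * of_int S) \<in> L"
    and missed: "\<forall>t\<in>L. fst t + \<sigma> * snd t \<noteq> - of_int S"
    and t: "t \<in> L"
  shows "(fst t + snd t) / 2 \<in> \<int>"
proof -
  have "fst t + \<sigma> * snd t \<in> \<int>" using \<sigma> integral[OF t] by auto
  then obtain k where k: "fst t + \<sigma> * snd t = of_int k" by (rule Ints_cases)
  have "even k"
  proof (rule ccontr)
    assume "odd k"
    then obtain a where a: "k = 2 * a + 1" by (rule oddE)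
    define x where "x = of_int (- S) *\<^sub>R t + of_int a *\<^sub>R (of_int S, \<sigma> * of_int S)"
    have "x \<in> L" unfolding x_def using closed t s by blast
    moreover have "fst x + \<sigma> * snd x = - of_int S * (fst t + \<sigma> * snd t) + 2 * of_int a * of_int S"
      using \<sigma> by (auto simp: x_def algebra_simps)
    then have "fst x + \<sigma> * snd x = - of_int S" unfolding k a by (simp add: algebra_simps)
    ultimately show False using missed by blast
  qed
  then obtain m where "k = 2 * m" by (rule evenE)
  then have "(fst t + snd t) / 2 = of_int m + ((1 - \<sigma>) / 2) * snd t"
    using k by (simp add: field_simps)
  moreover have "(1 - \<sigma>) / 2 \<in> \<int>" using \<sigma> by auto
  then have "of_int m + ((1 - \<sigma>) / 2) * snd t \<in> \<int>"
    using integral[OF t] by (intro Ints_add Ints_mult) auto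
  ultimately show ?thesis by (simp only:)
qed

lemma diagonal_mirror_free:
  assumes "type_pgg_45 G \<or> type_pmg_45 G"
  shows "\<exists>\<sigma>. (\<sigma> = 1 \<or> \<sigma> = -1) \<and> (\<lambda>p. \<sigma> *\<^sub>R sw p) \<in> lin ` G
             \<and> \<not> has_mirror G (\<lambda>p. \<sigma> *\<^sub>R sw p)"
proof -
  have in_G: "sw \<in> lin ` G" "(\<lambda>p. - sw p) \<in> lin ` G"
    and "\<not> has_mirror G sw \<or> \<not> has_mirror G (\<lambda>p. - sw p)"
    using assms unfolding type_pgg_45_def type_pmg_45_def pointgroup_D2_diag_def by auto
  then consider "\<not> has_mirror G sw" | "\<not> has_mirror G (\<lambda>p. - sw p)" by blast
  then show ?thesis
  proof cases
    case 1 then show ?thesis using in_G(1) by (intro exI[of _ 1]) simp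
  next
    case 2 then show ?thesis using in_G(2) by (intro exI[of _ "-1"]) simp
  qed
qed

(* Integral vectors with even coordinate sum: translations preserving the chessboard pattern. *)
definition chessboard_vector :: "pt \<Rightarrow> bool" where
  "chessboard_vector t \<longleftrightarrow> fst t \<in> \<int> \<and> snd t \<in> \<int> \<and> (fst t + snd t) / 2 \<in> \<int>"

lemma translations_chessboard:
  assumes type: "type_pgg_45 (G1 D) \<or> type_pmg_45 (G1 D)" and L: "transl D = lattice v w"
    and t: "t \<in> transl D"
  shows "chessboard_vector t"
proof -
  obtain \<sigma> where \<sigma>: "\<sigma> = 1 \<or> \<sigma> = -1" and "(\<lambda>p. \<sigma> *\<^sub>R sw p) \<in> lin ` G1 D"
    and no_mirror: "\<not> has_mirror (G1 D) (\<lambda>p. \<sigma> *\<^sub>R sw p)"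
    using diagonal_mirror_free[OF type] by blast
  then obtain g where "g \<in> G1 D" "lin g = (\<lambda>p. \<sigma> *\<^sub>R sw p)" by auto
  then obtain S :: int where S: "(of_int S, \<sigma> * of_int S) \<in> transl D"
    "\<forall>t\<in>transl D. fst t + \<sigma> * snd t \<noteq> - of_int S"
    using glide_without_mirror[OF \<sigma> _ _ no_mirror] by blast
  have closed: "\<And>x y i j. x \<in> transl D \<Longrightarrow> y \<in> transl D
                  \<Longrightarrow> of_int i *\<^sub>R x + of_int j *\<^sub>R y \<in> transl D"
    unfolding L by (rule lattice_lincomb)
  have "(fst t + snd t) / 2 \<in> \<int>"
    using lattice_diagonal_even[OF \<sigma> closed transl_integral S t] .
  then show ?thesis using transl_integral[OF t] by (simp add: chessboard_vector_def)
qed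

lemma half_integer_iff_even: "(of_int X / 2 :: real) \<in> \<int> \<longleftrightarrow> even X"
proof
  assume "of_int X / 2 \<in> (\<int> :: real set)"
  then obtain k where "(of_int X :: real) / 2 = of_int k" by (rule Ints_cases)
  then have "X = 2 * k" by linarith
  then show "even X" by simp
next
  assume "even X"
  then obtain k where "X = 2 * k" by (rule evenE)
  then show "(of_int X / 2 :: real) \<in> \<int>" by simp
qed

lemma half_grid_point_class:
  assumes "2 * fst q \<in> \<int>" "2 * snd q \<in> \<int>"
  shows "(cell_corner q \<or> cell_centre q \<longleftrightarrow> fst q + snd q \<in> \<int>)
       \<and> (boundary_not_corner q \<longleftrightarrow> fst q + snd q \<notin> \<int>)"
proof -
  obtain X where X: "2 * fst q = of_int X" using assms(1) by (rule Ints_cases)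
  obtain Y where Y: "2 * snd q = of_int Y" using assms(2) by (rule Ints_cases)
  have e: "fst q = of_int X / 2" "snd q = of_int Y / 2"
    "fst q - 1/2 = of_int (X - 1) / 2" "snd q - 1/2 = of_int (Y - 1) / 2"
    "fst q + snd q = of_int (X + Y) / 2"
    using X Y by (simp_all add: field_simps)
  have "fst q \<in> \<int> \<longleftrightarrow> even X" "snd q \<in> \<int> \<longleftrightarrow> even Y"
    unfolding e(1,2) by (rule half_integer_iff_even)+
  moreover have "fst q - 1/2 \<in> \<int> \<longleftrightarrow> odd X" "snd q - 1/2 \<in> \<int> \<longleftrightarrow> odd Y"
    "fst q + snd q \<in> \<int> \<longleftrightarrow> even (X + Y)"
    unfolding e(3-5) half_integer_iff_even by simp_all
  ultimately show ?thesis
    unfolding cell_corner_def cell_centre_def boundary_not_corner_def by simp blast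
qed

lemma nine_points_half_turns:
  assumes "half_turn_centre D c" "v \<in> transl D" "w \<in> transl D"
  shows "\<forall>q\<in>nine_points c v w. half_turn_centre D q"
proof
  fix q assume "q \<in> nine_points c v w"
  then obtain a b :: nat where q: "q = c + (real a / 2) *\<^sub>R v + (real b / 2) *\<^sub>R w"
    unfolding nine_points_def by blast
  show "half_turn_centre D q"
    unfolding q using half_turn_shift_multiple[OF half_turn_shift_multiple[OF assms(1,2)] assms(3)] .
qed

(* The nine points differ from c by half chessboard vectors, so all have the same kind. *)
lemma nine_points_same_class:
  assumes c: "2 * fst c \<in> \<int>" "2 * snd c \<in> \<int>"
    and v: "chessboard_vector v" and w: "chessboard_vector w"
  shows "(\<forall>q\<in>nine_points c v w. cell_corner q \<or> cell_centre q)
       \<or> (\<forall>q\<in>nine_points c v w. boundary_not_corner q)"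
proof -
  have same_class: "(cell_corner q \<or> cell_centre q \<longleftrightarrow> fst c + snd c \<in> \<int>)
             \<and> (boundary_not_corner q \<longleftrightarrow> fst c + snd c \<notin> \<int>)"
    if nine: "q \<in> nine_points c v w" for q
  proof -
    obtain a b :: nat where q: "q = c + (real a / 2) *\<^sub>R v + (real b / 2) *\<^sub>R w"
      using nine unfolding nine_points_def by blast
    have "2 * fst q = 2 * fst c + real a * fst v + real b * fst w"
      "2 * snd q = 2 * snd c + real a * snd v + real b * snd w"
      unfolding q by (simp_all add: field_simps)
    then have "2 * fst q \<in> \<int>" "2 * snd q \<in> \<int>"
      using c v w unfolding chessboard_vector_def by (simp_all add: Ints_add Ints_mult)
    moreover have "fst q + snd q
        = (fst c + snd c) + (real a * ((fst v + snd v) / 2) + real b * ((fst w + snd w) / 2))"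
      unfolding q by (simp add: field_simps)
    moreover have "real a * ((fst v + snd v) / 2) + real b * ((fst w + snd w) / 2) \<in> \<int>"
      using v w unfolding chessboard_vector_def by (intro Ints_add Ints_mult Ints_of_nat) auto
    ultimately show ?thesis using half_grid_point_class[of q] by simp
  qed
  show ?thesis
    using same_class by (cases "fst c + snd c \<in> \<int>") auto
qed

theorem lemma1:
  fixes D :: "int \<Rightarrow> int \<Rightarrow> bool" and c v w :: pt
  assumes "periodic D"
    and "isonemal D"
    and "type_pgg_45 (G1 D) \<or> type_pmg_45 (G1 D)"
    and "rect_lattice_unit D c v w"
    and "half_turn_centre D c" and "half_turn_centre D (c + v)"
    and "half_turn_centre D (c + w)" and "half_turn_centre D (c + v + w)"
  shows "(\<forall>q\<in>nine_points c v w. half_turn_centre D q) \<and>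
         ((\<forall>q\<in>nine_points c v w. cell_corner q \<or> cell_centre q) \<or>
          (\<forall>q\<in>nine_points c v w. boundary_not_corner q))"
proof -
  have L: "transl D = lattice v w"
    using assms(4) by (simp add: rect_lattice_unit_def lattice_def)
  then have v: "v \<in> transl D" and w: "w \<in> transl D" using lattice_generators by blast+
  have "chessboard_vector v" "chessboard_vector w"
    using translations_chessboard[OF assms(3) L] v w by blast+
  moreover have "2 * fst c \<in> \<int>" "2 * snd c \<in> \<int>"
    using half_turn_centre_integral[OF assms(5)] by simp_all
  ultimately show ?thesis
    using nine_points_half_turns[OF assms(5) v w] nine_points_same_class by blast
qed

end
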